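(* Let $L$ be a finite lattice. If $\mathsf{C}(L)=\mathsf{Pol}_{0,1}(L)$, then the only tolerances on $L$ are $\mathrm{id}_L=\{(x,x):x\in L\}$ and $L^2$.
   Context: $L$ has bounds $0,1$. An $n$-ary aggregation function on $L$ ($n\ge1$) is a nondecreasing map $A:L^n\to L$ with $A(0,\dots,0)=0$ and $A(1,\dots,1)=1$; $\mathsf{C}(L)$ is the set of all of them. Polynomials on $L$ are functions $L^n\to L$ built from projections and constants by finitely many pointwise joins and meets; $\mathsf{Pol}_{0,1}(L)$ is the set of polynomials preserving $0$ and $1$ (i.e. $p(0,\dots,0)=0$, $p(1,\dots,1)=1$). A tolerance on $L$ is a reflexive, symmetric binary relation $T$ such that $(a,b),(c,d)\in T$ imply $(a\vee c,b\vee d),(a\wedge c,b\wedge d)\in T$. *)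

theory Defs
  imports Main
begin

text \<open>n-ary operations on L are represented as functions on lists; only their
values on lists of length n matter.\<close>

definition aggregation :: "nat \<Rightarrow> ('a::bounded_lattice list \<Rightarrow> 'a) \<Rightarrow> bool" where
  "aggregation n A \<longleftrightarrow> n \<ge> 1 \<and>
     (\<forall>xs ys. length xs = n \<longrightarrow> length ys = n \<longrightarrow> list_all2 (\<le>) xs ys \<longrightarrow> A xs \<le> A ys) \<and>
     A (replicate n bot) = bot \<and> A (replicate n top) = top"

inductive polynomial :: "nat \<Rightarrow> ('a::lattice list \<Rightarrow> 'a) \<Rightarrow> bool" for n :: nat where
  proj: "i < n \<Longrightarrow> polynomial n (\<lambda>xs. xs ! i)"
| const: "polynomial n (\<lambda>_. c)"
| join: "polynomial n p \<Longrightarrow> polynomial n q \<Longrightarrow> polynomial n (\<lambda>xs. sup (p xs) (q xs))"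
| meet: "polynomial n p \<Longrightarrow> polynomial n q \<Longrightarrow> polynomial n (\<lambda>xs. inf (p xs) (q xs))"

definition pol01 :: "nat \<Rightarrow> ('a::bounded_lattice list \<Rightarrow> 'a) \<Rightarrow> bool" where
  "pol01 n f \<longleftrightarrow> n \<ge> 1 \<and>
     (\<exists>p. polynomial n p \<and> (\<forall>xs. length xs = n \<longrightarrow> f xs = p xs)) \<and>
     f (replicate n bot) = bot \<and> f (replicate n top) = top"

definition C_eq_Pol01 :: "'a::bounded_lattice itself \<Rightarrow> bool" where
  "C_eq_Pol01 _ \<longleftrightarrow> (\<forall>n (f :: 'a list \<Rightarrow> 'a). aggregation n f \<longleftrightarrow> pol01 n f)"

definition tolerance :: "('a::lattice \<times> 'a) set \<Rightarrow> bool" where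
  "tolerance T \<longleftrightarrow> (\<forall>x. (x, x) \<in> T) \<and> (\<forall>a b. (a, b) \<in> T \<longrightarrow> (b, a) \<in> T) \<and>
     (\<forall>a b c d. (a, b) \<in> T \<longrightarrow> (c, d) \<in> T \<longrightarrow>
        (sup a c, sup b d) \<in> T \<and> (inf a c, inf b d) \<in> T)"

end

theory Submission
  imports Defs
begin

text \<open>Every polynomial preserves every tolerance, so under \<open>C(L) = Pol\<^sub>0\<^sub>,\<^sub>1(L)\<close> so does
  every aggregation function. If a tolerance relates \<open>u\<close> to some \<open>v \<noteq> u\<close>, we may assume
  \<open>v \<notle> u\<close>; the unary threshold function sending \<open>x\<close> to \<open>1\<close> if \<open>v \<le> x\<close> and to \<open>0\<close> otherwise
  is an aggregation function and maps \<open>(u, v)\<close> to \<open>(0, 1)\<close>. A tolerance containing \<open>(0, 1)\<close>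
  contains every comparable pair (meet and join with reflexive pairs), hence \<open>(c, c \<sqinter> d)\<close>
  and \<open>(c \<sqinter> d, d)\<close>, whose join is \<open>(c, d)\<close>.\<close>

lemma tolerance_polynomial:
  assumes "tolerance T" and "polynomial n p"
    and "length xs = n" and "list_all2 (\<lambda>x y. (x, y) \<in> T) xs ys"
  shows "(p xs, p ys) \<in> T"
  using assms(2-)
proof (induction rule: polynomial.induct)
  case (proj i)
  then show ?case using list_all2_nthD[of _ xs ys i] by auto
qed (use \<open>tolerance T\<close> in \<open>auto simp: tolerance_def\<close>)

lemma tolerance_aggregation:
  assumes "C_eq_Pol01 TYPE('a::bounded_lattice)" and "tolerance T"
    and "aggregation n (f :: 'a list \<Rightarrow> 'a)"
    and "length xs = n" and "list_all2 (\<lambda>x y. (x, y) \<in> T) xs ys"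
  shows "(f xs, f ys) \<in> T"
proof -
  have "pol01 n f"
    using assms(1,3) unfolding C_eq_Pol01_def by blast
  then obtain p where p: "polynomial n p" "\<And>zs. length zs = n \<Longrightarrow> f zs = p zs"
    unfolding pol01_def by blast
  have "length ys = n"
    using assms(4,5) by (simp add: list_all2_lengthD)
  then show ?thesis
    using tolerance_polynomial[OF assms(2) p(1) assms(4,5)] p(2) assms(4) by simp
qed

lemma aggregation_threshold:
  fixes v :: "'a::bounded_lattice"
  assumes "v \<noteq> bot"
  shows "aggregation 1 (\<lambda>xs. if v \<le> hd xs then top else bot)"
  unfolding aggregation_def
proof (intro conjI allI impI)
  fix xs ys :: "'a list"
  assume "length xs = 1" "length ys = 1" "list_all2 (\<le>) xs ys"
  then obtain x y where "xs = [x]" "ys = [y]" "x \<le> y"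
    by (cases xs; cases ys) auto
  then show "(if v \<le> hd xs then top else bot :: 'a) \<le> (if v \<le> hd ys then top else bot)"
    by (auto dest: order_trans)
qed (use assms in \<open>auto simp: bot_unique\<close>)

lemma tolerance_not_Id_obtains:
  assumes "tolerance T" and "T \<noteq> Id"
  obtains u v where "(u, v) \<in> T" and "\<not> v \<le> u"
proof -
  obtain a b where ab: "(a, b) \<in> T" "a \<noteq> b"
    using assms unfolding tolerance_def by auto
  moreover have "(b, a) \<in> T"
    using assms(1) ab(1) unfolding tolerance_def by blast
  ultimately show ?thesis
    using that antisym by blast
qed

lemma tolerance_bot_top_le:
  assumes "tolerance T" and "(bot, top) \<in> T" and "c \<le> (d::'a::bounded_lattice)"
  shows "(c, d) \<in> T"
proof -
  have "(sup bot c, sup top c) \<in> T" and "(d, d) \<in> T"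
    using assms(1,2) unfolding tolerance_def by blast+
  then have "(inf (sup bot c) d, inf (sup top c) d) \<in> T"
    using assms(1) unfolding tolerance_def by blast
  then show ?thesis
    using assms(3) by (simp add: inf_absorb1 inf_absorb2)
qed

lemma tolerance_bot_top_eq_UNIV:
  assumes "tolerance T" and "(bot, top) \<in> (T :: ('a::bounded_lattice \<times> 'a) set)"
  shows "T = UNIV"
proof -
  have "(c, d) \<in> T" for c d
  proof -
    have "(inf c d, c) \<in> T" and "(inf c d, d) \<in> T"
      using tolerance_bot_top_le[OF assms] by simp_all
    then have "(c, inf c d) \<in> T" and "(inf c d, d) \<in> T"
      using assms(1) unfolding tolerance_def by blast+
    then have "(sup c (inf c d), sup (inf c d) d) \<in> T"
      using assms(1) unfolding tolerance_def by blast
    then show ?thesis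
      by (simp add: sup_absorb1 sup_absorb2)
  qed
  then show ?thesis by auto
qed

theorem mainTheorem3:
  fixes T :: "('a::{finite, bounded_lattice} \<times> 'a) set"
  assumes "C_eq_Pol01 TYPE('a)"
    and "tolerance T"
  shows "T = Id \<or> T = UNIV"
proof (cases "T = Id")
  case False
  with assms(2) obtain u v where uv: "(u, v) \<in> T" "\<not> v \<le> u"
    by (rule tolerance_not_Id_obtains)
  define f :: "'a list \<Rightarrow> 'a" where "f = (\<lambda>xs. if v \<le> hd xs then top else bot)"
  have "aggregation 1 f"
    unfolding f_def using uv(2) by (intro aggregation_threshold) auto
  then have "(f [u], f [v]) \<in> T"
    using tolerance_aggregation[OF assms] uv(1) by simp
  then have "(bot, top) \<in> T"
    using uv(2) by (simp add: f_def)
  then show ?thesis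
    using tolerance_bot_top_eq_UNIV[OF assms(2)] by blast
qed simp

end
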